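(* Let $\Sigma$ be an alphabet with $|\Sigma|=1$ and let $L\subseteq\Sigma^*$ be a language satisfying the Pumping Lemma for context-free languages, i.e. the property $\mathit{PL}(L)$ below holds. Then $L$ is a regular language. Here $\mathit{PL}(L)$ is the property: there exists $n>0$ such that for every $z\in L$ with $|z|\ge n$ there exist $u,v,w,x,y\in\Sigma^*$ such that (1) $z=uvwxy$, (2) $vx\neq\varepsilon$, (3) $|vwx|\le n$, and (4) for all $i\ge 0$, $u v^i w x^i y\in L$.
   Context: For a word $w$, $|w|$ denotes its length, $w^0=\varepsilon$ is the empty word and $w^{i+1}=w^i w$. No assumption is made that $L$ is context-free; only the property $\mathit{PL}(L)$ is assumed. *)

theory Defs
  imports Main
begin

definition wpow :: "'a list \<Rightarrow> nat \<Rightarrow> 'a list" where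
  "wpow w i = concat (replicate i w)"

definition conc :: "'a list set \<Rightarrow> 'a list set \<Rightarrow> 'a list set" where
  "conc A B = {xs @ ys | xs ys. xs \<in> A \<and> ys \<in> B}"

inductive_set star :: "'a list set \<Rightarrow> 'a list set" for A :: "'a list set" where
  star_Nil: "[] \<in> star A"
| star_app: "xs \<in> A \<Longrightarrow> ys \<in> star A \<Longrightarrow> xs @ ys \<in> star A"

datatype 'a rexp = Zero | One | Atom 'a | Plus "'a rexp" "'a rexp"
  | Times "'a rexp" "'a rexp" | Star "'a rexp"

primrec lang :: "'a rexp \<Rightarrow> 'a list set" where
  "lang Zero = {}"
| "lang One = {[]}"
| "lang (Atom a) = {[a]}"
| "lang (Plus r s) = lang r \<union> lang s"
| "lang (Times r s) = conc (lang r) (lang s)"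
| "lang (Star r) = star (lang r)"

definition regular_over :: "'a set \<Rightarrow> 'a list set \<Rightarrow> bool" where
  "regular_over \<Sigma> L \<longleftrightarrow> (\<exists>r. set_rexp r \<subseteq> \<Sigma> \<and> lang r = L)"

definition PL :: "'a set \<Rightarrow> 'a list set \<Rightarrow> bool" where
  "PL \<Sigma> L \<longleftrightarrow> (\<exists>n>0. \<forall>z\<in>L. length z \<ge> n \<longrightarrow>
     (\<exists>u v w x y. u \<in> lists \<Sigma> \<and> v \<in> lists \<Sigma> \<and> w \<in> lists \<Sigma> \<and> x \<in> lists \<Sigma> \<and> y \<in> lists \<Sigma> \<and>
        z = u @ v @ w @ x @ y \<and> v @ x \<noteq> [] \<and> length (v @ w @ x) \<le> n \<and>
        (\<forall>i. u @ wpow v i @ w @ wpow x i @ y \<in> L)))"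

end

theory Submission
  imports Defs
begin

text \<open>Over a one-letter alphabet a word is determined by its length, and pumping
  \<open>u v\<^sup>i w x\<^sup>i y\<close> only changes the length by multiples of \<open>p = |vx|\<close>, where
  \<open>0 < p \<le> n\<close>. Hence every length \<open>m \<ge> n\<close> of a word in \<open>L\<close> can be increased by any
  multiple of \<open>n!\<close>, so the set of lengths is ultimately periodic: finitely many short
  lengths together with finitely many arithmetic progressions of difference \<open>n!\<close>,
  one for each residue class, starting at its least element \<open>\<ge> n\<close>. Such a set of
  lengths is described by a regular expression.\<close>

lemma length_wpow: "length (wpow w i) = i * length w"
  by (simp add: wpow_def length_concat sum_list_replicate)

lemma wpow_replicate: "wpow (replicate m a) i = replicate (i * m) a"
  by (induction i) (simp_all add: wpow_def replicate_add)

lemma lists_singleton_eq_replicate: "w \<in> lists {a} \<Longrightarrow> w = replicate (length w) a"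
  by (induction w) auto

lemma unary_language_eq_image_lengths:
  assumes "L \<subseteq> lists {a}"
  shows "L = (\<lambda>k. replicate k a) ` {k. replicate k a \<in> L}"
proof
  show "L \<subseteq> (\<lambda>k. replicate k a) ` {k. replicate k a \<in> L}"
  proof
    fix w assume "w \<in> L"
    with assms have "w = replicate (length w) a"
      by (blast intro: lists_singleton_eq_replicate)
    with \<open>w \<in> L\<close> show "w \<in> (\<lambda>k. replicate k a) ` {k. replicate k a \<in> L}"
      by (metis (mono_tags) image_eqI mem_Collect_eq)
  qed
qed auto

lemma star_singleton: "star {w} = range (wpow w)"
proof
  show "star {w} \<subseteq> range (wpow w)"
  proof
    fix u assume "u \<in> star {w}"
    then show "u \<in> range (wpow w)"
    proof (induction rule: star.induct)
      case star_Nil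
      have "wpow w 0 = []" by (simp add: wpow_def)
      then show ?case by (metis rangeI)
    next
      case (star_app xs ys)
      then obtain i where "ys = wpow w i" by auto
      with star_app.hyps have "xs @ ys = wpow w (Suc i)" by (simp add: wpow_def)
      then show ?case by (metis rangeI)
    qed
  qed
next
  have "wpow w i \<in> star {w}" for i
    by (induction i) (simp_all add: wpow_def star.intros)
  then show "range (wpow w) \<subseteq> star {w}" by auto
qed

fun rexp_of_word :: "'a list \<Rightarrow> 'a rexp" where
  "rexp_of_word [] = One"
| "rexp_of_word (a # w) = Times (Atom a) (rexp_of_word w)"

lemma lang_rexp_of_word: "lang (rexp_of_word w) = {w}"
  by (induction w) (auto simp: conc_def)

lemma set_rexp_of_word: "set_rexp (rexp_of_word w) = set w"
  by (induction w) auto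

lemma regular_over_singleton: "set w \<subseteq> \<Sigma> \<Longrightarrow> regular_over \<Sigma> {w}"
  unfolding regular_over_def
  by (metis lang_rexp_of_word set_rexp_of_word)

lemma regular_over_Un:
  assumes "regular_over \<Sigma> A" "regular_over \<Sigma> B"
  shows "regular_over \<Sigma> (A \<union> B)"
proof -
  from assms obtain r s where "set_rexp r \<subseteq> \<Sigma>" "lang r = A" "set_rexp s \<subseteq> \<Sigma>" "lang s = B"
    unfolding regular_over_def by blast
  then show ?thesis unfolding regular_over_def by (intro exI[of _ "Plus r s"]) auto
qed

lemma regular_over_UN:
  assumes "finite I" "\<And>i. i \<in> I \<Longrightarrow> regular_over \<Sigma> (A i)"
  shows "regular_over \<Sigma> (\<Union>i\<in>I. A i)"
  using assms
proof (induction I rule: finite_induct)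
  case empty
  show ?case unfolding regular_over_def by (intro exI[of _ Zero]) auto
next
  case (insert i I)
  then show ?case by (simp add: regular_over_Un)
qed

lemma regular_over_conc:
  assumes "regular_over \<Sigma> A" "regular_over \<Sigma> B"
  shows "regular_over \<Sigma> (conc A B)"
proof -
  from assms obtain r s where "set_rexp r \<subseteq> \<Sigma>" "lang r = A" "set_rexp s \<subseteq> \<Sigma>" "lang s = B"
    unfolding regular_over_def by blast
  then show ?thesis unfolding regular_over_def by (intro exI[of _ "Times r s"]) auto
qed

lemma regular_over_star:
  assumes "regular_over \<Sigma> A"
  shows "regular_over \<Sigma> (star A)"
proof -
  from assms obtain r where "set_rexp r \<subseteq> \<Sigma>" "lang r = A"
    unfolding regular_over_def by blast
  then show ?thesis unfolding regular_over_def by (intro exI[of _ "Star r"]) auto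
qed

lemma regular_over_unary_progression:
  "regular_over {a} (range (\<lambda>j. replicate (g + j * N) a))"
proof -
  have "range (\<lambda>j. replicate (g + j * N) a) = conc {replicate g a} (star {replicate N a})"
    by (auto simp: star_singleton wpow_replicate conc_def replicate_add)
  then show ?thesis
    by (simp add: regular_over_conc regular_over_star regular_over_singleton set_replicate_conv_if)
qed

lemma regular_over_unary_ultimately_periodic:
  assumes "finite F" "finite G"
  shows "regular_over {a} ((\<lambda>k. replicate k a) ` (F \<union> (\<Union>g\<in>G. range (\<lambda>j. g + j * N))))"
proof -
  have "(\<lambda>k. replicate k a) ` (F \<union> (\<Union>g\<in>G. range (\<lambda>j. g + j * N)))
      = (\<Union>k\<in>F. {replicate k a}) \<union> (\<Union>g\<in>G. range (\<lambda>j. replicate (g + j * N) a))"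
    by (auto simp: image_Union image_image)
  also have "regular_over {a} \<dots>"
    using assms by (intro regular_over_Un regular_over_UN)
      (simp_all add: regular_over_singleton regular_over_unary_progression set_replicate_conv_if)
  finally show ?thesis .
qed

lemma pumpable_lengths_shift_fact:
  assumes pump: "\<And>m. m \<in> S \<Longrightarrow> n \<le> m \<Longrightarrow> \<exists>p. 0 < p \<and> p \<le> n \<and> (\<forall>k. m + k * p \<in> S)"
    and "m \<in> S" "n \<le> m"
  shows "m + fact n \<in> S"
proof -
  obtain p where "0 < p" "p \<le> n" and m_pump: "\<forall>k. m + k * p \<in> S"
    using pump \<open>m \<in> S\<close> \<open>n \<le> m\<close> by blast
  then have "p dvd fact n" by (simp add: dvd_fact)
  then obtain q where "fact n = q * p" by (metis dvdE mult.commute)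
  with m_pump show ?thesis by metis
qed

lemma ultimately_periodic_decomp:
  fixes S :: "nat set"
  assumes "0 < N" and shift: "\<And>m. m \<in> S \<Longrightarrow> n \<le> m \<Longrightarrow> m + N \<in> S"
  obtains G where "finite G" "S = {s \<in> S. s < n} \<union> (\<Union>g\<in>G. range (\<lambda>j. g + j * N))"
proof -
  have shifts: "m + j * N \<in> S" if "m \<in> S" "n \<le> m" for m j
  proof (induction j)
    case (Suc j)
    with shift have "m + j * N + N \<in> S" using \<open>n \<le> m\<close> by simp
    then show ?case by (simp add: add_ac)
  qed (simp add: \<open>m \<in> S\<close>)
  define C where "C r = {m \<in> S. n \<le> m \<and> m mod N = r}" for r
  define G where "G = (\<lambda>r. LEAST m. m \<in> C r) ` {r. r < N \<and> C r \<noteq> {}}"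
  have "S \<subseteq> {s \<in> S. s < n} \<union> (\<Union>g\<in>G. range (\<lambda>j. g + j * N))"
  proof
    fix s assume "s \<in> S"
    show "s \<in> {s \<in> S. s < n} \<union> (\<Union>g\<in>G. range (\<lambda>j. g + j * N))"
    proof (cases "s < n")
      case False
      define g where "g = (LEAST m. m \<in> C (s mod N))"
      have s_C: "s \<in> C (s mod N)" using False \<open>s \<in> S\<close> by (simp add: C_def)
      then have "g \<in> C (s mod N)" "g \<le> s" unfolding g_def by (auto intro: LeastI Least_le)
      moreover have "g \<in> G" unfolding G_def g_def using s_C \<open>0 < N\<close> by auto
      moreover from \<open>g \<in> C (s mod N)\<close> have "s mod N = g mod N" by (simp add: C_def)
      then have "N dvd s - g" using mod_eq_dvd_iff_nat[OF \<open>g \<le> s\<close>] by simp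
      then obtain q where "s - g = N * q" by (rule dvdE)
      with \<open>g \<le> s\<close> have "s = g + q * N" by (simp add: mult.commute)
      ultimately show ?thesis by blast
    qed (use \<open>s \<in> S\<close> in blast)
  qed
  moreover have "g \<in> S" "n \<le> g" if "g \<in> G" for g
    using that unfolding G_def by (auto intro: LeastI2_ex simp: C_def)
  then have "(\<Union>g\<in>G. range (\<lambda>j. g + j * N)) \<subseteq> S" by (auto intro: shifts)
  ultimately have "S = {s \<in> S. s < n} \<union> (\<Union>g\<in>G. range (\<lambda>j. g + j * N))" by blast
  moreover have "finite G" by (simp add: G_def)
  ultimately show ?thesis using that by blast
qed

lemma PL_unary_pumps_lengths:
  assumes "PL {a} L" "L \<subseteq> lists {a}"
  obtains n where
    "\<And>m. replicate m a \<in> L \<Longrightarrow> n \<le> m \<Longrightarrow> \<exists>p. 0 < p \<and> p \<le> n \<and> (\<forall>k. replicate (m + k * p) a \<in> L)"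
proof -
  obtain n where PL_n: "\<forall>z\<in>L. n \<le> length z \<longrightarrow>
     (\<exists>u v w x y. u \<in> lists {a} \<and> v \<in> lists {a} \<and> w \<in> lists {a} \<and> x \<in> lists {a} \<and> y \<in> lists {a} \<and>
        z = u @ v @ w @ x @ y \<and> v @ x \<noteq> [] \<and> length (v @ w @ x) \<le> n \<and>
        (\<forall>i. u @ wpow v i @ w @ wpow x i @ y \<in> L))"
    using assms(1) unfolding PL_def by blast
  have "\<exists>p. 0 < p \<and> p \<le> n \<and> (\<forall>k. replicate (m + k * p) a \<in> L)"
    if m_L: "replicate m a \<in> L" and "n \<le> m" for m
  proof -
    have len: "n \<le> length (replicate m a)" using \<open>n \<le> m\<close> by simp
    obtain u v w x y where "u \<in> lists {a}" "v \<in> lists {a}" "w \<in> lists {a}" "x \<in> lists {a}"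
      "y \<in> lists {a}" and z: "replicate m a = u @ v @ w @ x @ y" and "v @ x \<noteq> []"
      and "length (v @ w @ x) \<le> n" and pumped: "\<forall>i. u @ wpow v i @ w @ wpow x i @ y \<in> L"
      using PL_n[rule_format, OF m_L len] by (elim exE conjE)
    define p where "p = length v + length x"
    have "replicate (m + k * p) a \<in> L" for k
    proof -
      let ?z = "u @ wpow v (Suc k) @ w @ wpow x (Suc k) @ y"
      have "?z \<in> L" using pumped by blast
      moreover have "?z \<in> lists {a}" using \<open>?z \<in> L\<close> assms(2) by blast
      moreover have "length ?z = m + k * p"
        using arg_cong[OF z, of length] by (simp add: length_wpow p_def algebra_simps)
      ultimately show ?thesis by (metis lists_singleton_eq_replicate)
    qed
    moreover have "0 < p" "p \<le> n"
      using \<open>v @ x \<noteq> []\<close> \<open>length (v @ w @ x) \<le> n\<close> by (auto simp: p_def)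
    ultimately show ?thesis by blast
  qed
  then show ?thesis using that by blast
qed

theorem theorem1:
  fixes \<Sigma> :: "'a set" and L :: "'a list set"
  assumes "card \<Sigma> = 1"
    and "L \<subseteq> lists \<Sigma>"
    and "PL \<Sigma> L"
  shows "regular_over \<Sigma> L"
proof -
  obtain a where \<Sigma>: "\<Sigma> = {a}" using assms(1) card_1_singletonE by blast
  define S where "S = {k. replicate k a \<in> L}"
  obtain n where "\<And>m. m \<in> S \<Longrightarrow> n \<le> m \<Longrightarrow> \<exists>p. 0 < p \<and> p \<le> n \<and> (\<forall>k. m + k * p \<in> S)"
    using PL_unary_pumps_lengths[of a L] assms(2,3) unfolding \<Sigma> S_def mem_Collect_eq by blast
  then have "\<And>m. m \<in> S \<Longrightarrow> n \<le> m \<Longrightarrow> m + fact n \<in> S"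
    by (rule pumpable_lengths_shift_fact)
  then obtain G where "finite G"
    and S_decomp: "S = {s \<in> S. s < n} \<union> (\<Union>g\<in>G. range (\<lambda>j. g + j * fact n))"
    by (rule ultimately_periodic_decomp[OF fact_gt_zero])
  have "L = (\<lambda>k. replicate k a) ` S"
    using assms(2) unfolding \<Sigma> S_def by (rule unary_language_eq_image_lengths)
  also have "S = {s \<in> S. s < n} \<union> (\<Union>g\<in>G. range (\<lambda>j. g + j * fact n))"
    by (rule S_decomp)
  also have "regular_over {a} ((\<lambda>k. replicate k a) ` \<dots>)"
    using \<open>finite G\<close> by (intro regular_over_unary_ultimately_periodic) simp_all
  finally show ?thesis unfolding \<Sigma> .
qed

end
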